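(* Let $m\in\mathbb{Z}_{>0}$, let $X$ be a set with $|X|=4m$, and let $\mu_X$ be the uniform distribution on $X$. Let $S$ be the class of all $s:X\to\{-1,1\}$ with $|\{x:s(x)=1\}|=m$, and $B$ the class of all $b:X\to\{-1,1\}$ with $|\{x:b(x)=1\}|=2m$. Then for all $\varepsilon,\delta\ge0$, $\#\mathsf{CompL}^{\mu_X}(S,B,\varepsilon,\delta)=0$, whereas for all $\varepsilon\in(0,1/4)$ and $\delta\in(0,1/2)$, $\#\mathsf{CompL}^{\mu_X}(B,S,\varepsilon,\delta)\ge(1/2-2\varepsilon)m$.
   Context: Distribution-specific comparative learning $\mathsf{CompL}^{\mu_X}_n(S,B,\varepsilon,\delta)$: (possibly randomized) learners taking $n$ points of $X\times\{-1,1\}$ and outputting $f:X\to\{-1,1\}$ such that for every distribution $\mu$ on $X\times\{-1,1\}$ with marginal $\mu|_X=\mu_X$ and $\Pr_\mu[s(x)=y]=1$ for some $s\in S$, given $n$ i.i.d. samples, with probability $\ge1-\delta$, $\Pr_\mu[f(x)\ne y]\le\inf_{b\in B}\Pr_\mu[b(x)\ne y]+\varepsilon$. $\#\mathsf{CompL}^{\mu_X}$ is the least such $n$. *)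

theory Defs
  imports "HOL-Probability.Probability"
begin

text \<open>Labels are the integers -1 and 1. A distribution on X x {-1,1} is a pmf on 'a x int
  whose support lies in X x {-1,1}.\<close>

definition labels :: "int set" where
  "labels = {-1, 1}"

fun iid_sample :: "'b pmf \<Rightarrow> nat \<Rightarrow> 'b list pmf" where
  "iid_sample \<mu> 0 = return_pmf []"
| "iid_sample \<mu> (Suc n) = bind_pmf \<mu> (\<lambda>z. map_pmf (\<lambda>zs. z # zs) (iid_sample \<mu> n))"

definition err :: "('a \<times> int) pmf \<Rightarrow> ('a \<Rightarrow> int) \<Rightarrow> real" where
  "err \<mu> f = measure_pmf.prob \<mu> {(x, y). f x \<noteq> y}"

text \<open>A (possibly randomized) learner maps a sample to a distribution over hypotheses.
  L is a member of CompL^{muX}_n(S,B,eps,delta) over domain X.\<close>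
definition is_compl_learner ::
  "'a set \<Rightarrow> 'a pmf \<Rightarrow> ('a \<Rightarrow> int) set \<Rightarrow> ('a \<Rightarrow> int) set \<Rightarrow> real \<Rightarrow> real \<Rightarrow> nat
    \<Rightarrow> (('a \<times> int) list \<Rightarrow> ('a \<Rightarrow> int) pmf) \<Rightarrow> bool" where
  "is_compl_learner X \<mu>X S B \<epsilon> \<delta> n L \<longleftrightarrow>
     (\<forall>D. set D \<subseteq> X \<times> labels \<longrightarrow> (\<forall>f\<in>set_pmf (L D). f ` X \<subseteq> labels)) \<and>
     (\<forall>\<mu> :: ('a \<times> int) pmf.
        set_pmf \<mu> \<subseteq> X \<times> labels \<and> map_pmf fst \<mu> = \<mu>X \<and>
        (\<exists>s\<in>S. measure_pmf.prob \<mu> {(x, y). s x = y} = 1) \<longrightarrow>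
        measure_pmf.prob (bind_pmf (iid_sample \<mu> n) L)
           {f. err \<mu> f \<le> (\<Sqinter>b\<in>B. err \<mu> b) + \<epsilon>} \<ge> 1 - \<delta>)"

definition compl_num ::
  "'a set \<Rightarrow> 'a pmf \<Rightarrow> ('a \<Rightarrow> int) set \<Rightarrow> ('a \<Rightarrow> int) set \<Rightarrow> real \<Rightarrow> real \<Rightarrow> enat" where
  "compl_num X \<mu>X S B \<epsilon> \<delta> =
     (if \<exists>n L. is_compl_learner X \<mu>X S B \<epsilon> \<delta> n L
      then enat (LEAST n. \<exists>L. is_compl_learner X \<mu>X S B \<epsilon> \<delta> n L) else \<infinity>)"

definition fixed_pos_class :: "'a set \<Rightarrow> nat \<Rightarrow> ('a \<Rightarrow> int) set" where
  "fixed_pos_class X k = {h. h ` X \<subseteq> labels \<and> card {x\<in>X. h x = 1} = k}"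

end

(*
  Upper bound: with S-realizable data every target has m positives out of 4m points, so the
  constant hypothesis -1 has error 1/4, while every hypothesis with 2m positives disagrees with
  the target on at least m points.  Hence no samples are needed.

  Lower bound: split X into 2m pairs and let the targets be the 2^(2m) hypotheses that are
  positive on exactly one point of each pair.  The best hypothesis with m positives has error
  1/4, so an eps-good output is within (1 + 4 eps) m points of the target.  A sample of size
  n < (1 - 4 eps) m misses a set W of more than (1 + 4 eps) m pairs; flipping the target on W does not
  change what the learner sees, but moves the target by 2 |W| > 2 (1 + 4 eps) m points, so no
  output is good for both targets.  Averaging over this involution, the learner succeeds with
  probability at most 1/2 < 1 - delta.
*)
theory Submission
  imports Defs
begin

definition labelled_uniform :: "'a set \<Rightarrow> ('a \<Rightarrow> int) \<Rightarrow> ('a \<times> int) pmf" where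
  "labelled_uniform X s = map_pmf (\<lambda>x. (x, s x)) (pmf_of_set X)"

definition competitive_set :: "('a \<times> int) pmf \<Rightarrow> ('a \<Rightarrow> int) set \<Rightarrow> real \<Rightarrow> ('a \<Rightarrow> int) set" where
  "competitive_set \<mu> B \<epsilon> = {f. err \<mu> f \<le> (\<Sqinter>b\<in>B. err \<mu> b) + \<epsilon>}"

definition sign_indicator :: "'a set \<Rightarrow> 'a \<Rightarrow> int" where
  "sign_indicator A x = (if x \<in> A then 1 else -1)"

lemma compl_num_eq_0I:
  assumes "is_compl_learner X \<mu>X S B \<epsilon> \<delta> 0 L"
  shows "compl_num X \<mu>X S B \<epsilon> \<delta> = 0"
  using assms unfolding compl_num_def zero_enat_def by (auto intro: Least_eq_0)

lemma compl_num_ge: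
  assumes "\<And>n L. is_compl_learner X \<mu>X S B \<epsilon> \<delta> n L \<Longrightarrow> r \<le> real n"
  shows "ereal r \<le> ereal_of_enat (compl_num X \<mu>X S B \<epsilon> \<delta>)"
proof (cases "\<exists>n L. is_compl_learner X \<mu>X S B \<epsilon> \<delta> n L")
  case True
  then obtain L where "is_compl_learner X \<mu>X S B \<epsilon> \<delta> (LEAST n. \<exists>L. is_compl_learner X \<mu>X S B \<epsilon> \<delta> n L) L"
    using LeastI_ex[of "\<lambda>n. \<exists>L. is_compl_learner X \<mu>X S B \<epsilon> \<delta> n L"] by blast
  with True show ?thesis unfolding compl_num_def by (auto dest: assms)
qed (simp add: compl_num_def)

lemma iid_sample_map_pmf: "iid_sample (map_pmf h p) n = map_pmf (map h) (iid_sample p n)"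
  by (induction n) (simp_all add: bind_map_pmf map_bind_pmf map_pmf_comp)

lemma set_pmf_iid_sample:
  "xs \<in> set_pmf (iid_sample p n) \<Longrightarrow> length xs = n \<and> set xs \<subseteq> set_pmf p"
  by (induction n arbitrary: xs) (auto, blast)

lemma err_labelled_uniform:
  assumes "finite X" "X \<noteq> {}"
  shows "err (labelled_uniform X s) f = card {x\<in>X. f x \<noteq> s x} / card X"
proof -
  have "X \<inter> (\<lambda>x. (x, s x)) -` {(x, y). f x \<noteq> y} = {x\<in>X. f x \<noteq> s x}" by auto
  then show ?thesis using assms by (simp add: err_def labelled_uniform_def measure_pmf_of_set)
qed

lemma realizable_eq_labelled_uniform:
  assumes "map_pmf fst \<mu> = pmf_of_set X" and "measure_pmf.prob \<mu> {(x, y). s x = y} = 1"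
  shows "\<mu> = labelled_uniform X s"
proof -
  have "set_pmf \<mu> \<subseteq> {(x, y). s x = y}"
    using assms(2) measure_pmf.prob_eq_1[of "{(x, y). s x = y}" \<mu>] by (auto simp: AE_measure_pmf_iff)
  then have "map_pmf (\<lambda>x. (x, s x)) (map_pmf fst \<mu>) = map_pmf id \<mu>"
    unfolding map_pmf_comp by (intro map_pmf_cong) auto
  then show ?thesis
    using assms(1) by (simp add: labelled_uniform_def)
qed

lemma compl_learner_labelled_uniform:
  assumes L: "is_compl_learner X (pmf_of_set X) S B \<epsilon> \<delta> n L"
    and "finite X" "X \<noteq> {}" "s \<in> S" "s ` X \<subseteq> labels"
  shows "1 - \<delta> \<le> measure_pmf.prob
           (bind_pmf (iid_sample (pmf_of_set X) n) (\<lambda>xs. L (map (\<lambda>x. (x, s x)) xs)))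
           (competitive_set (labelled_uniform X s) B \<epsilon>)"
proof -
  have "set_pmf (labelled_uniform X s) \<subseteq> X \<times> labels"
    using assms by (auto simp: labelled_uniform_def)
  moreover have "map_pmf fst (labelled_uniform X s) = pmf_of_set X"
    by (simp add: labelled_uniform_def map_pmf_comp)
  moreover have "measure_pmf.prob (labelled_uniform X s) {(x, y). s x = y} = 1"
    by (simp add: labelled_uniform_def measure_pmf.prob_space)
  ultimately have "1 - \<delta> \<le> measure_pmf.prob (bind_pmf (iid_sample (labelled_uniform X s) n) L)
                   (competitive_set (labelled_uniform X s) B \<epsilon>)"
    using L \<open>s \<in> S\<close> unfolding is_compl_learner_def competitive_set_def by blast
  then show ?thesis
    by (simp add: labelled_uniform_def iid_sample_map_pmf bind_map_pmf)
qed

lemma sign_indicator_in_fixed_pos_class: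
  assumes "A \<subseteq> X"
  shows "sign_indicator A \<in> fixed_pos_class X (card A)"
proof -
  have "{x\<in>X. sign_indicator A x = 1} = A" using assms by (auto simp: sign_indicator_def)
  then show ?thesis by (auto simp: fixed_pos_class_def labels_def sign_indicator_def)
qed

lemma card_disagree_triangle:
  assumes "finite X"
  shows "card {x\<in>X. s x \<noteq> s' x} \<le> card {x\<in>X. f x \<noteq> s x} + card {x\<in>X. f x \<noteq> s' x}"
proof -
  have "card {x\<in>X. s x \<noteq> s' x} \<le> card ({x\<in>X. f x \<noteq> s x} \<union> {x\<in>X. f x \<noteq> s' x})"
    using assms by (intro card_mono) auto
  also have "\<dots> \<le> card {x\<in>X. f x \<noteq> s x} + card {x\<in>X. f x \<noteq> s' x}"
    by (rule card_Un_le)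
  finally show ?thesis .
qed

lemma err_labelled_uniform_ge:
  assumes "finite X" "X \<noteq> {}" "s \<in> fixed_pos_class X p" "b \<in> fixed_pos_class X k"
  shows "(real k - real p) / card X \<le> err (labelled_uniform X s) b"
proof -
  have "k - p \<le> card ({x\<in>X. b x = 1} - {x\<in>X. s x = 1})"
    using assms diff_card_le_card_Diff[of "{x\<in>X. s x = 1}" "{x\<in>X. b x = 1}"]
    by (simp add: fixed_pos_class_def)
  also have "\<dots> \<le> card {x\<in>X. b x \<noteq> s x}"
    using assms(1) by (intro card_mono) auto
  finally have "real k - real p \<le> card {x\<in>X. b x \<noteq> s x}" by linarith
  then show ?thesis
    using assms(1,2) by (simp add: err_labelled_uniform divide_right_mono)
qed

lemma Inf_err_labelled_uniform_le:
  assumes "finite X" "X \<noteq> {}" "s \<in> fixed_pos_class X p" "k \<le> p"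
  shows "(\<Sqinter>b\<in>fixed_pos_class X k. err (labelled_uniform X s) b) \<le> (real p - real k) / card X"
proof -
  have pos: "card {x\<in>X. s x = 1} = p" "s ` X \<subseteq> {-1, 1}"
    using assms(3) by (auto simp: fixed_pos_class_def labels_def)
  obtain A where A: "A \<subseteq> {x\<in>X. s x = 1}" "card A = k"
    using obtain_subset_with_card_n[of k "{x\<in>X. s x = 1}"] assms(4) pos by auto
  have "{x\<in>X. sign_indicator A x \<noteq> s x} = {x\<in>X. s x = 1} - A"
    using A pos(2) by (auto simp: sign_indicator_def)
  then have "card {x\<in>X. sign_indicator A x \<noteq> s x} = p - k"
    using A assms(1) pos(1) by (simp add: card_Diff_subset finite_subset)
  then have "err (labelled_uniform X s) (sign_indicator A) = (real p - real k) / card X"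
    using assms by (simp add: err_labelled_uniform of_nat_diff)
  moreover have "(\<Sqinter>b\<in>fixed_pos_class X k. err (labelled_uniform X s) b)
                   \<le> err (labelled_uniform X s) (sign_indicator A)"
    using sign_indicator_in_fixed_pos_class[of A X] A
    by (intro cInf_lower bdd_belowI[where m = 0]) (auto simp: err_def)
  ultimately show ?thesis by simp
qed

lemma card_disagree_le_of_competitive:
  fixes \<epsilon> :: real
  assumes "finite X" "X \<noteq> {}" "s \<in> fixed_pos_class X p" "k \<le> p"
    and "f \<in> competitive_set (labelled_uniform X s) (fixed_pos_class X k) \<epsilon>"
  shows "card {x\<in>X. f x \<noteq> s x} \<le> real p - real k + \<epsilon> * card X"
proof -
  have "card {x\<in>X. f x \<noteq> s x} / card X \<le> (real p - real k) / card X + \<epsilon>"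
    using assms Inf_err_labelled_uniform_le[OF assms(1-4)]
    by (simp add: competitive_set_def err_labelled_uniform)
  moreover have "card X > 0" using assms(1,2) by (simp add: card_gt_0_iff)
  ultimately show ?thesis by (simp add: field_simps)
qed

lemma is_compl_learner_constant_negative:
  fixes \<epsilon> \<delta> :: real
  assumes "finite X" "X \<noteq> {}" "2 * m \<le> k" "k \<le> card X" "\<epsilon> \<ge> 0" "\<delta> \<ge> 0"
  shows "is_compl_learner X (pmf_of_set X) (fixed_pos_class X m) (fixed_pos_class X k) \<epsilon> \<delta> 0
           (\<lambda>_. return_pmf (\<lambda>_. -1))"
  unfolding is_compl_learner_def
proof (intro conjI allI impI)
  fix D :: "('a \<times> int) list"
  show "\<forall>f\<in>set_pmf (return_pmf (\<lambda>_. - 1)). f ` X \<subseteq> labels" by (auto simp: labels_def)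
next
  fix \<mu> :: "('a \<times> int) pmf"
  assume "set_pmf \<mu> \<subseteq> X \<times> labels \<and> map_pmf fst \<mu> = pmf_of_set X \<and>
    (\<exists>s\<in>fixed_pos_class X m. measure_pmf.prob \<mu> {(x, y). s x = y} = 1)"
  then obtain s where s: "s \<in> fixed_pos_class X m" and \<mu>: "\<mu> = labelled_uniform X s"
    using realizable_eq_labelled_uniform by blast
  have "{x\<in>X. -1 \<noteq> s x} = {x\<in>X. s x = 1}"
    using s by (auto simp: fixed_pos_class_def labels_def)
  then have err_neg: "err \<mu> (\<lambda>_. -1) = m / card X"
    using s assms(1,2) by (simp add: \<mu> err_labelled_uniform fixed_pos_class_def)
  obtain A where "A \<subseteq> X" "card A = k"
    using obtain_subset_with_card_n assms(4) by metis
  then have "fixed_pos_class X k \<noteq> {}"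
    using sign_indicator_in_fixed_pos_class by blast
  moreover have "m / card X \<le> err \<mu> b" if "b \<in> fixed_pos_class X k" for b
  proof -
    have "m / card X \<le> (real k - real m) / card X"
      using assms(3) by (intro divide_right_mono) auto
    also have "\<dots> \<le> err \<mu> b"
      using err_labelled_uniform_ge[OF assms(1,2) s that] by (simp add: \<mu>)
    finally show ?thesis .
  qed
  ultimately have "err \<mu> (\<lambda>_. -1) \<le> (\<Sqinter>b\<in>fixed_pos_class X k. err \<mu> b)"
    unfolding err_neg by (intro cInf_greatest) auto
  then show "1 - \<delta> \<le> measure_pmf.prob (bind_pmf (iid_sample \<mu> 0) (\<lambda>_. return_pmf (\<lambda>_. - 1)))
      {f. err \<mu> f \<le> (\<Sqinter>b\<in>fixed_pos_class X k. err \<mu> b) + \<epsilon>}"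
    using assms(5,6) by (simp add: indicator_def)
qed

definition pair_label :: "'i set \<Rightarrow> 'i \<times> bool \<Rightarrow> int" where
  "pair_label T p = (if snd p = (fst p \<in> T) then 1 else -1)"

lemma card_Collect_bij_betw:
  assumes "bij_betw \<pi> X Y"
  shows "card {x\<in>X. P (\<pi> x)} = card {y\<in>Y. P y}"
  by (rule bij_betw_same_card, rule bij_betw_Collect[OF assms]) auto

lemma pair_label_in_fixed_pos_class:
  assumes "bij_betw \<pi> X (I \<times> UNIV)"
  shows "pair_label T \<circ> \<pi> \<in> fixed_pos_class X (card I)"
proof -
  have "{p\<in>I \<times> UNIV. pair_label T p = 1} = (\<lambda>j. (j, j \<in> T)) ` I"
    by (auto simp: pair_label_def split: if_splits)
  moreover have "card ((\<lambda>j. (j, j \<in> T)) ` I) = card I"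
    by (rule card_image) (auto simp: inj_on_def)
  ultimately have "card {x\<in>X. (pair_label T \<circ> \<pi>) x = 1} = card I"
    using card_Collect_bij_betw[OF assms, of "\<lambda>p. pair_label T p = 1"] by simp
  moreover have "(pair_label T \<circ> \<pi>) ` X \<subseteq> labels"
    by (auto simp: labels_def pair_label_def)
  ultimately show ?thesis
    unfolding fixed_pos_class_def by blast
qed

lemma card_pair_label_flip_disagree:
  assumes "bij_betw \<pi> X (I \<times> UNIV)" "W \<subseteq> I"
  shows "card {x\<in>X. pair_label T (\<pi> x) \<noteq> pair_label (sym_diff T W) (\<pi> x)} = 2 * card W"
proof -
  have "{p\<in>I \<times> UNIV. pair_label T p \<noteq> pair_label (sym_diff T W) p} = W \<times> UNIV"
    using assms(2) by (auto simp: pair_label_def split: if_splits)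
  then show ?thesis
    using card_Collect_bij_betw[OF assms(1),
        of "\<lambda>p. pair_label T p \<noteq> pair_label (sym_diff T W) p"]
    by (simp add: card_cartesian_product)
qed

lemma sum_prob_le_half_of_disjoint_pairing:
  fixes N :: "'t \<Rightarrow> 'b pmf"
  assumes \<iota>: "bij_betw \<iota> A A"
    and N: "\<And>T. T \<in> A \<Longrightarrow> N (\<iota> T) = N T"
    and disj: "\<And>T. T \<in> A \<Longrightarrow> E T \<inter> E (\<iota> T) = {}"
  shows "(\<Sum>T\<in>A. measure_pmf.prob (N T) (E T)) \<le> card A / 2"
proof -
  have swap: "(\<Sum>T\<in>A. measure_pmf.prob (N T) (E T)) = (\<Sum>T\<in>A. measure_pmf.prob (N T) (E (\<iota> T)))"
    using sum.reindex_bij_betw[OF \<iota>, of "\<lambda>T. measure_pmf.prob (N T) (E T)"] N by simp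
  have "(\<Sum>T\<in>A. measure_pmf.prob (N T) (E T)) + (\<Sum>T\<in>A. measure_pmf.prob (N T) (E (\<iota> T)))
      = (\<Sum>T\<in>A. measure_pmf.prob (N T) (E T \<union> E (\<iota> T)))"
    unfolding sum.distrib[symmetric]
    by (rule sum.cong) (auto simp: measure_pmf.finite_measure_Union disj)
  also have "\<dots> \<le> (\<Sum>T\<in>A. 1)" by (rule sum_mono) simp
  finally show ?thesis using swap by simp
qed

lemma sum_prob_bind_pmf_le:
  assumes bound: "\<And>xs. xs \<in> set_pmf p \<Longrightarrow> (\<Sum>T\<in>A. measure_pmf.prob (N T xs) (E T)) \<le> c"
  shows "(\<Sum>T\<in>A. measure_pmf.prob (bind_pmf p (N T)) (E T)) \<le> c"
proof -
  obtain xs where "xs \<in> set_pmf p" using set_pmf_not_empty by fast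
  then have "0 \<le> c" using bound[of xs] sum_nonneg[of A "\<lambda>T. measure_pmf.prob (N T xs) (E T)"] by simp
  have "ennreal (\<Sum>T\<in>A. measure_pmf.prob (bind_pmf p (N T)) (E T))
      = (\<Sum>T\<in>A. emeasure (bind_pmf p (N T)) (E T))"
    by (simp add: measure_pmf.emeasure_eq_measure sum_ennreal)
  also have "\<dots> = \<integral>\<^sup>+xs. (\<Sum>T\<in>A. emeasure (N T xs) (E T)) \<partial>p"
    by (simp add: nn_integral_sum)
  also have "\<dots> \<le> \<integral>\<^sup>+xs. ennreal c \<partial>p"
  proof (intro nn_integral_mono_AE, unfold AE_measure_pmf_iff, intro ballI)
    fix xs assume "xs \<in> set_pmf p"
    then show "(\<Sum>T\<in>A. emeasure (N T xs) (E T)) \<le> ennreal c"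
      using bound[of xs] by (simp add: measure_pmf.emeasure_eq_measure sum_ennreal ennreal_leI)
  qed
  also have "\<dots> = ennreal c" by simp
  finally show ?thesis using ennreal_le_iff[OF \<open>0 \<le> c\<close>] by blast
qed

lemma sum_prob_competitive_le_half:
  fixes \<epsilon> :: real and L :: "('a \<times> int) list \<Rightarrow> ('a \<Rightarrow> int) pmf"
  assumes "finite X" "X \<noteq> {}" and \<pi>: "bij_betw \<pi> X (I \<times> (UNIV :: bool set))"
    and "k \<le> card I" and short: "real (length xs) < real k - \<epsilon> * card X"
  shows "(\<Sum>T\<in>Pow I. measure_pmf.prob (L (map (\<lambda>x. (x, pair_label T (\<pi> x))) xs))
            (competitive_set (labelled_uniform X (pair_label T \<circ> \<pi>)) (fixed_pos_class X k) \<epsilon>))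
         \<le> card (Pow I) / 2"
proof -
  define W where "W = I - (\<lambda>x. fst (\<pi> x)) ` set xs"
  have "W \<subseteq> I" by (auto simp: W_def)
  have "card I - length xs \<le> card W"
    using diff_card_le_card_Diff[of "(\<lambda>x. fst (\<pi> x)) ` set xs" I]
      card_image_le[of "set xs" "\<lambda>x. fst (\<pi> x)"] card_length[of xs]
    by (simp add: W_def)
  then have card_W: "real (card I) - length xs \<le> card W" by linarith
  have flip: "bij_betw (\<lambda>T. sym_diff T W) (Pow I) (Pow I)"
    using \<open>W \<subseteq> I\<close> by (intro bij_betw_byWitness[where f' = "\<lambda>T. sym_diff T W"]) auto
  \<comment> \<open>W consists of the pairs the sample never touches, so flipping T on W is invisible to L.\<close>
  have same_sample: "map (\<lambda>x. (x, pair_label (sym_diff T W) (\<pi> x))) xs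
      = map (\<lambda>x. (x, pair_label T (\<pi> x))) xs" for T by (auto simp: W_def pair_label_def)
  have disjoint: "competitive_set (labelled_uniform X (pair_label T \<circ> \<pi>)) (fixed_pos_class X k) \<epsilon> \<inter>
      competitive_set (labelled_uniform X (pair_label (sym_diff T W) \<circ> \<pi>)) (fixed_pos_class X k) \<epsilon> = {}"
    for T
  proof (intro equals0I, elim IntE)
    fix f
    assume "f \<in> competitive_set (labelled_uniform X (pair_label T \<circ> \<pi>)) (fixed_pos_class X k) \<epsilon>"
      and "f \<in> competitive_set (labelled_uniform X (pair_label (sym_diff T W) \<circ> \<pi>)) (fixed_pos_class X k) \<epsilon>"
    from this[THEN card_disagree_le_of_competitive[OF assms(1,2)
          pair_label_in_fixed_pos_class[OF \<pi>] assms(4)]]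
    have "card {x\<in>X. f x \<noteq> pair_label T (\<pi> x)} + card {x\<in>X. f x \<noteq> pair_label (sym_diff T W) (\<pi> x)}
        \<le> 2 * (real (card I) - real k + \<epsilon> * card X)"
      by simp
    moreover have "2 * card W \<le> card {x\<in>X. f x \<noteq> pair_label T (\<pi> x)}
        + card {x\<in>X. f x \<noteq> pair_label (sym_diff T W) (\<pi> x)}"
      using card_disagree_triangle[OF assms(1), of "\<lambda>x. pair_label T (\<pi> x)"
          "\<lambda>x. pair_label (sym_diff T W) (\<pi> x)" f]
        card_pair_label_flip_disagree[OF \<pi> \<open>W \<subseteq> I\<close>, of T] by simp
    then have "2 * real (card W) \<le> card {x\<in>X. f x \<noteq> pair_label T (\<pi> x)}
        + card {x\<in>X. f x \<noteq> pair_label (sym_diff T W) (\<pi> x)}"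
      by linarith
    ultimately show False
      using card_W short by argo
  qed
  show ?thesis
    by (rule sum_prob_le_half_of_disjoint_pairing[OF flip]) (simp_all add: same_sample disjoint)
qed

lemma compl_learner_sample_size_ge:
  fixes \<epsilon> \<delta> :: real
  assumes "finite X" "X \<noteq> {}" and \<pi>: "bij_betw \<pi> X (I \<times> (UNIV :: bool set))" and "k \<le> card I"
    and "\<delta> < 1/2"
    and L: "is_compl_learner X (pmf_of_set X) (fixed_pos_class X (card I)) (fixed_pos_class X k) \<epsilon> \<delta> n L"
  shows "real k - \<epsilon> * card X \<le> n"
proof (rule ccontr)
  assume "\<not> ?thesis"
  then have short: "real n < real k - \<epsilon> * card X" by simp
  define E where "E T = competitive_set (labelled_uniform X (pair_label T \<circ> \<pi>)) (fixed_pos_class X k) \<epsilon>"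
    for T
  define N where "N T = (\<lambda>xs. L (map (\<lambda>x. (x, pair_label T (\<pi> x))) xs))" for T
  have "finite I"
    using bij_betw_finite[OF \<pi>] \<open>finite X\<close> finite_cartesian_productD1[of I "UNIV :: bool set"]
    by simp
  have "1 - \<delta> \<le> measure_pmf.prob (bind_pmf (iid_sample (pmf_of_set X) n) (N T)) (E T)" for T
  proof -
    have "pair_label T \<circ> \<pi> \<in> fixed_pos_class X (card I)"
      by (rule pair_label_in_fixed_pos_class[OF \<pi>])
    from compl_learner_labelled_uniform[OF L assms(1,2) this] this
    show ?thesis by (simp add: E_def N_def fixed_pos_class_def)
  qed
  then have "card (Pow I) * (1 - \<delta>)
      \<le> (\<Sum>T\<in>Pow I. measure_pmf.prob (bind_pmf (iid_sample (pmf_of_set X) n) (N T)) (E T))"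
    using sum_mono[of "Pow I" "\<lambda>_. 1 - \<delta>"] by simp
  also have "\<dots> \<le> card (Pow I) / 2"
  proof (rule sum_prob_bind_pmf_le)
    fix xs
    assume "xs \<in> set_pmf (iid_sample (pmf_of_set X) n)"
    then have "length xs = n" using set_pmf_iid_sample by blast
    then show "(\<Sum>T\<in>Pow I. measure_pmf.prob (N T xs) (E T)) \<le> card (Pow I) / 2"
      unfolding E_def N_def using sum_prob_competitive_le_half[OF assms(1-4)] short by simp
  qed
  finally have "card (Pow I) * (1/2 - \<delta>) \<le> 0" by (simp add: algebra_simps)
  moreover have "0 < card (Pow I) * (1/2 - \<delta>)"
    using \<open>finite I\<close> \<open>\<delta> < 1/2\<close> by (simp add: card_Pow)
  ultimately show False by simp
qed

theorem lemmaC1: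
  fixes X :: "'a set" and m :: nat
  assumes "m > 0" and "finite X" and "card X = 4 * m"
  shows "(\<forall>\<epsilon> \<delta>. \<epsilon> \<ge> 0 \<longrightarrow> \<delta> \<ge> 0 \<longrightarrow>
            compl_num X (pmf_of_set X) (fixed_pos_class X m) (fixed_pos_class X (2 * m)) \<epsilon> \<delta> = 0)
       \<and> (\<forall>\<epsilon> \<delta>. 0 < \<epsilon> \<longrightarrow> \<epsilon> < 1/4 \<longrightarrow> 0 < \<delta> \<longrightarrow> \<delta> < 1/2 \<longrightarrow>
            ereal ((1/2 - 2 * \<epsilon>) * real m) \<le>
              ereal_of_enat (compl_num X (pmf_of_set X) (fixed_pos_class X (2 * m)) (fixed_pos_class X m) \<epsilon> \<delta>))"
proof (intro conjI allI impI)
  have "X \<noteq> {}" using assms by auto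
  fix \<epsilon> \<delta> :: real
  {
    assume "\<epsilon> \<ge> 0" "\<delta> \<ge> 0"
    then show "compl_num X (pmf_of_set X) (fixed_pos_class X m) (fixed_pos_class X (2 * m)) \<epsilon> \<delta> = 0"
      using assms \<open>X \<noteq> {}\<close> by (intro compl_num_eq_0I[OF is_compl_learner_constant_negative]) auto
  next
    assume "0 < \<epsilon>" "\<epsilon> < 1/4" "0 < \<delta>" "\<delta> < 1/2"
    have "\<exists>\<pi>. bij_betw \<pi> X ({0..<2 * m} \<times> (UNIV :: bool set))"
      using finite_same_card_bij[OF assms(2), of "{0..<2 * m} \<times> (UNIV :: bool set)"] assms(3)
      by (simp add: card_cartesian_product)
    then obtain \<pi> where \<pi>: "bij_betw \<pi> X ({0..<2 * m} \<times> (UNIV :: bool set))" ..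
    show "ereal ((1/2 - 2 * \<epsilon>) * real m)
        \<le> ereal_of_enat (compl_num X (pmf_of_set X) (fixed_pos_class X (2 * m)) (fixed_pos_class X m) \<epsilon> \<delta>)"
    proof (rule compl_num_ge)
      fix n L
      assume "is_compl_learner X (pmf_of_set X) (fixed_pos_class X (2 * m)) (fixed_pos_class X m) \<epsilon> \<delta> n L"
      then have "real m - \<epsilon> * card X \<le> n"
        using compl_learner_sample_size_ge[OF assms(2) \<open>X \<noteq> {}\<close> \<pi>, of m] \<open>\<delta> < 1/2\<close> by simp
      then show "(1/2 - 2 * \<epsilon>) * real m \<le> n"
        using assms(3) \<open>\<epsilon> < 1/4\<close> by (simp add: algebra_simps)
    qed
  }
qed

end
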